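(* Let $\Gamma$ be an embedding of $K_{n,n}$ in $S^3$ with vertex sets $V$ and $W$, and let $G \leq \mathrm{TSG}_+(\Gamma)$ be a subgroup isomorphic to $A_4$ or $A_5$. Then every element $g \in G$ satisfies $g(V) = V$ (and hence $g(W) = W$).
   Context: $K_{n,n}$ is the complete bipartite graph with vertex sets $V$, $W$ of $n$ vertices each; every vertex of $V$ is adjacent to every vertex of $W$, and there are no other edges. $\mathrm{TSG}_+(\Gamma)$ is the subgroup of $\mathrm{Aut}(K_{n,n})$ consisting of automorphisms induced by orientation preserving homeomorphisms of $(S^3,\Gamma)$. *)

theory Defs
  imports "HOL-Homology.Homology" "HOL-Algebra.Sym_Groups" "HOL-Algebra.Bij"
begin

text \<open>S^3 is modelled as nsphere 3 (unit sphere in R^4, points of type nat => real).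
  An embedding of K_{n,n} with vertex sets V, W is given by vertex positions pos
  and, for each edge (v,w) with v in V, w in W, an ea (injective path on [0,1])
  from pos v to pos w; distinct edges meet only in common endpoints and no vertex
  lies in the interior of an edge.\<close>

definition kbip_adj :: "'v set \<Rightarrow> 'v set \<Rightarrow> 'v \<Rightarrow> 'v \<Rightarrow> bool" where
  "kbip_adj V W x y \<longleftrightarrow> (x \<in> V \<and> y \<in> W) \<or> (x \<in> W \<and> y \<in> V)"

definition edge_img ::
  "'v set \<Rightarrow> ('v \<Rightarrow> 'v \<Rightarrow> real \<Rightarrow> nat \<Rightarrow> real) \<Rightarrow> 'v \<Rightarrow> 'v \<Rightarrow> (nat \<Rightarrow> real) set" where
  "edge_img V ea x y = (if x \<in> V then ea x y ` {0..1} else ea y x ` {0..1})"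

definition graph_img ::
  "'v set \<Rightarrow> 'v set \<Rightarrow> ('v \<Rightarrow> nat \<Rightarrow> real) \<Rightarrow> ('v \<Rightarrow> 'v \<Rightarrow> real \<Rightarrow> nat \<Rightarrow> real) \<Rightarrow> (nat \<Rightarrow> real) set" where
  "graph_img V W pos ea = pos ` (V \<union> W) \<union> (\<Union>v\<in>V. \<Union>w\<in>W. ea v w ` {0..1})"

definition Knn_embedding ::
  "'v set \<Rightarrow> 'v set \<Rightarrow> ('v \<Rightarrow> nat \<Rightarrow> real) \<Rightarrow> ('v \<Rightarrow> 'v \<Rightarrow> real \<Rightarrow> nat \<Rightarrow> real) \<Rightarrow> bool" where
  "Knn_embedding V W pos ea \<longleftrightarrow>
     inj_on pos (V \<union> W) \<and>
     pos ` (V \<union> W) \<subseteq> topspace (nsphere 3) \<and>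
     (\<forall>v\<in>V. \<forall>w\<in>W.
        pathin (nsphere 3) (ea v w) \<and> inj_on (ea v w) {0..1} \<and>
        ea v w 0 = pos v \<and> ea v w 1 = pos w \<and>
        (\<forall>u\<in>V \<union> W. pos u \<in> ea v w ` {0..1} \<longrightarrow> u = v \<or> u = w)) \<and>
     (\<forall>v\<in>V. \<forall>w\<in>W. \<forall>v'\<in>V. \<forall>w'\<in>W. (v, w) \<noteq> (v', w') \<longrightarrow>
        ea v w ` {0..1} \<inter> ea v' w' ` {0..1} \<subseteq> pos ` ({v, w} \<inter> {v', w'}))"

definition Knn_aut :: "'v set \<Rightarrow> 'v set \<Rightarrow> ('v \<Rightarrow> 'v) set" where
  "Knn_aut V W = {\<sigma> \<in> Bij (V \<union> W). \<forall>x\<in>V \<union> W. \<forall>y\<in>V \<union> W.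
       kbip_adj V W x y \<longleftrightarrow> kbip_adj V W (\<sigma> x) (\<sigma> y)}"

definition orientation_preserving_homeo_S3 :: "((nat \<Rightarrow> real) \<Rightarrow> nat \<Rightarrow> real) \<Rightarrow> bool" where
  "orientation_preserving_homeo_S3 h \<longleftrightarrow>
     homeomorphic_map (nsphere 3) (nsphere 3) h \<and> Brouwer_degree2 3 h = 1"

definition TSG_plus ::
  "'v set \<Rightarrow> 'v set \<Rightarrow> ('v \<Rightarrow> nat \<Rightarrow> real) \<Rightarrow> ('v \<Rightarrow> 'v \<Rightarrow> real \<Rightarrow> nat \<Rightarrow> real) \<Rightarrow> ('v \<Rightarrow> 'v) set" where
  "TSG_plus V W pos ea = {\<sigma> \<in> Knn_aut V W. \<exists>h.
      orientation_preserving_homeo_S3 h \<and>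
      h ` graph_img V W pos ea = graph_img V W pos ea \<and>
      (\<forall>x\<in>V \<union> W. h (pos x) = pos (\<sigma> x)) \<and>
      (\<forall>v\<in>V. \<forall>w\<in>W. h ` edge_img V ea v w = edge_img V ea (\<sigma> v) (\<sigma> w))}"

end

theory Submission
  imports Defs
begin

text \<open>An automorphism of \<open>K\<^sub>n\<^sub>,\<^sub>n\<close> maps the set of vertices not adjacent to a vertex \<open>x\<close>,
  which is the part containing \<open>x\<close>, onto the corresponding set for its image; so it either
  preserves both parts or swaps them. A swap composed with itself three times is again a swap,
  hence an automorphism whose cube preserves the parts preserves them itself. The alternating
  groups are generated by 3-cycles, so every element of \<open>G\<close> is a product of part-preserving
  automorphisms.\<close>

lemma bij_betw_image_complement_part:
  assumes "bij_betw f (A \<union> B) (A \<union> B)" "A \<inter> B = {}"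
  shows "f ` B = (A \<union> B) - f ` A"
proof -
  have "f ` B = f ` ((A \<union> B) - A)" using assms(2) by (simp add: Un_Diff Diff_triv Int_commute)
  also have "\<dots> = (A \<union> B) - f ` A"
    using assms(1) inj_on_image_set_diff[of f "A \<union> B" "A \<union> B" A]
    by (simp add: bij_betw_def)
  finally show ?thesis .
qed

lemma compose_image: "A \<subseteq> S \<Longrightarrow> compose S f g ` A = f ` g ` A"
  by (auto simp: compose_def)

lemma setwise_stabilizer_subgroup:
  assumes "A \<subseteq> S"
  shows "subgroup {g \<in> Bij S. g ` A = A} (BijGroup S)"
proof (rule subgroup.intro)
  show "{g \<in> Bij S. g ` A = A} \<subseteq> carrier (BijGroup S)" by (auto simp: BijGroup_def)
  show "\<one>\<^bsub>BijGroup S\<^esub> \<in> {g \<in> Bij S. g ` A = A}"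
    using assms id_Bij by (auto simp: BijGroup_def)
  fix g h assume "g \<in> {g \<in> Bij S. g ` A = A}" "h \<in> {g \<in> Bij S. g ` A = A}"
  then show "g \<otimes>\<^bsub>BijGroup S\<^esub> h \<in> {g \<in> Bij S. g ` A = A}"
    using assms by (simp add: BijGroup_def compose_Bij compose_image)
next
  fix g assume g: "g \<in> {g \<in> Bij S. g ` A = A}"
  have inj: "inj_on g S" using g by (auto simp: Bij_def bij_betw_def)
  have "inv_into S g ` A = inv_into S g ` g ` A" using g by simp
  also have "\<dots> = A" using inj assms by (meson inv_into_image_cancel)
  finally have "inv_into S g ` A = A" .
  moreover have "restrict (inv_into S g) S ` A = inv_into S g ` A"
    using assms by (auto simp: image_iff)
  ultimately show "inv\<^bsub>BijGroup S\<^esub> g \<in> {g \<in> Bij S. g ` A = A}"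
    using g by (simp add: inv_BijGroup restrict_inv_into_Bij)
qed

lemma (in group_hom) subgroup_vimage:
  assumes "subgroup K H"
  shows "subgroup (carrier G \<inter> h -` K) G"
  using assms by (auto intro!: subgroup.intro simp: subgroup_def)

lemma Knn_aut_bij_betw: "\<sigma> \<in> Knn_aut V W \<Longrightarrow> bij_betw \<sigma> (V \<union> W) (V \<union> W)"
  by (simp add: Knn_aut_def Bij_def)

lemma Knn_aut_image_nonadjacent:
  assumes "\<sigma> \<in> Knn_aut V W" "x \<in> V \<union> W"
  shows "\<sigma> ` {y \<in> V \<union> W. \<not> kbip_adj V W x y} = {y \<in> V \<union> W. \<not> kbip_adj V W (\<sigma> x) y}"
proof -
  have bij: "bij_betw \<sigma> (V \<union> W) (V \<union> W)" using assms(1) by (rule Knn_aut_bij_betw)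
  have adj: "\<And>y. y \<in> V \<union> W \<Longrightarrow> kbip_adj V W x y \<longleftrightarrow> kbip_adj V W (\<sigma> x) (\<sigma> y)"
    using assms unfolding Knn_aut_def by blast
  show ?thesis
  proof (intro equalityI subsetI)
    fix z assume "z \<in> \<sigma> ` {y \<in> V \<union> W. \<not> kbip_adj V W x y}"
    then show "z \<in> {y \<in> V \<union> W. \<not> kbip_adj V W (\<sigma> x) y}"
      using adj bij_betw_apply[OF bij] by auto
  next
    fix z assume z: "z \<in> {y \<in> V \<union> W. \<not> kbip_adj V W (\<sigma> x) y}"
    then obtain y where "y \<in> V \<union> W" "z = \<sigma> y"
      using bij_betw_imp_surj_on[OF bij] by blast
    with z adj show "z \<in> \<sigma> ` {y \<in> V \<union> W. \<not> kbip_adj V W x y}" by auto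
  qed
qed

lemma Knn_aut_image_part:
  assumes "\<sigma> \<in> Knn_aut V W" "V \<inter> W = {}"
  shows "\<sigma> ` V = V \<or> \<sigma> ` V = W"
proof (cases "V = {}")
  case False
  then obtain x where x: "x \<in> V" by blast
  have nonadj: "{y \<in> V \<union> W. \<not> kbip_adj V W u y} = (if u \<in> V then V else W)" if "u \<in> V \<union> W" for u
    using that assms(2) by (auto simp: kbip_adj_def)
  have "\<sigma> x \<in> V \<union> W" using x bij_betw_apply[OF Knn_aut_bij_betw[OF assms(1)]] by blast
  then show ?thesis
    using Knn_aut_image_nonadjacent[OF assms(1), of x] nonadj[of x] nonadj[of "\<sigma> x"] x by auto
qed simp

lemma Knn_aut_preserves_part_if_cube_does:
  assumes "\<sigma> \<in> Knn_aut V W" "V \<inter> W = {}" "\<sigma> ` \<sigma> ` \<sigma> ` V = V"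
  shows "\<sigma> ` V = V"
proof (rule ccontr)
  assume "\<sigma> ` V \<noteq> V"
  then have swap_V: "\<sigma> ` V = W" using Knn_aut_image_part[OF assms(1,2)] by blast
  have "\<sigma> ` W = V"
    using bij_betw_image_complement_part[OF Knn_aut_bij_betw[OF assms(1)] assms(2)] swap_V assms(2)
    by blast
  then have "V = W" using assms(3) swap_V by simp
  with assms(2) \<open>\<sigma> ` V \<noteq> V\<close> show False by simp
qed

lemma Knn_aut_hom_preserves_part_if_generated_by_cube_roots:
  fixes G (structure)
  assumes "group G" and gen: "carrier G = generate G X" and cube: "\<And>x. x \<in> X \<Longrightarrow> x \<otimes> x \<otimes> x = \<one>"
    and hom: "\<phi> \<in> hom G (BijGroup (V \<union> W))" and aut: "\<phi> ` carrier G \<subseteq> Knn_aut V W"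
    and disjoint: "V \<inter> W = {}" and g: "g \<in> carrier G"
  shows "\<phi> g ` V = V"
proof -
  interpret group_hom G "BijGroup (V \<union> W)" \<phi>
    using assms(1) hom group_BijGroup by (simp add: group_hom_def group_hom_axioms_def)
  let ?K = "carrier G \<inter> \<phi> -` {f \<in> Bij (V \<union> W). f ` V = V}"
  have X_carrier: "X \<subseteq> carrier G" using gen generate.incl[of _ X G] by blast
  have "X \<subseteq> ?K"
  proof
    fix x assume x: "x \<in> X"
    then have xG: "x \<in> carrier G" using X_carrier by blast
    have \<phi>x: "\<phi> x \<in> Bij (V \<union> W)" using hom_closed[OF xG] by (simp add: BijGroup_def)
    have "\<phi> x \<otimes>\<^bsub>BijGroup (V \<union> W)\<^esub> \<phi> x \<otimes>\<^bsub>BijGroup (V \<union> W)\<^esub> \<phi> x = \<one>\<^bsub>BijGroup (V \<union> W)\<^esub>"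
    proof -
      have "\<phi> x \<otimes>\<^bsub>BijGroup (V \<union> W)\<^esub> \<phi> x \<otimes>\<^bsub>BijGroup (V \<union> W)\<^esub> \<phi> x = \<phi> (x \<otimes> x \<otimes> x)"
        using xG by simp
      also have "\<dots> = \<one>\<^bsub>BijGroup (V \<union> W)\<^esub>" using cube[OF x] by simp
      finally show ?thesis .
    qed
    then have cube_id: "compose (V \<union> W) (compose (V \<union> W) (\<phi> x) (\<phi> x)) (\<phi> x) = (\<lambda>y\<in>V \<union> W. y)"
      using \<phi>x by (simp add: BijGroup_def compose_Bij)
    have "\<phi> x ` V \<subseteq> V \<union> W"
      using Bij_imp_funcset[OF \<phi>x] by (auto simp: Pi_iff)
    then have "\<phi> x ` \<phi> x ` \<phi> x ` V = compose (V \<union> W) (compose (V \<union> W) (\<phi> x) (\<phi> x)) (\<phi> x) ` V"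
      by (simp add: compose_image)
    also have "\<dots> = V" unfolding cube_id by auto
    finally have "\<phi> x ` \<phi> x ` \<phi> x ` V = V" .
    moreover have "\<phi> x \<in> Knn_aut V W" using aut xG by blast
    ultimately have "\<phi> x ` V = V"
      using Knn_aut_preserves_part_if_cube_does disjoint by blast
    with xG \<phi>x show "x \<in> ?K" by simp
  qed
  moreover have "subgroup ?K G"
    by (rule subgroup_vimage[OF setwise_stabilizer_subgroup]) simp
  ultimately have "carrier G \<subseteq> ?K"
    unfolding gen by (rule G.generate_subgroup_incl)
  then show ?thesis using g by blast
qed

lemma three_cycle_cube_eq_one:
  assumes "h \<in> three_cycles k"
  shows "h \<otimes>\<^bsub>alt_group k\<^esub> h \<otimes>\<^bsub>alt_group k\<^esub> h = \<one>\<^bsub>alt_group k\<^esub>"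
proof -
  obtain cs where h: "h = cycle_of_list cs" and "cycle cs" "length cs = 3"
    using assms by blast
  obtain a b c where cs: "cs = [a, b, c]"
    using stupid_lemma[OF \<open>length cs = 3\<close>] by blast
  have "(h \<circ> h \<circ> h) x = x" for x
    using \<open>cycle cs\<close> unfolding h cs by (simp add: Transposition.transpose_def)
  then show ?thesis by (auto simp: alt_group_mult alt_group_one)
qed

theorem lemma1:
  fixes V W :: "'v set" and n :: nat
    and pos :: "'v \<Rightarrow> nat \<Rightarrow> real" and ea :: "'v \<Rightarrow> 'v \<Rightarrow> real \<Rightarrow> nat \<Rightarrow> real"
    and G :: "('v \<Rightarrow> 'v) set"
  assumes "finite V" "finite W" "V \<inter> W = {}" "card V = n" "card W = n"
    and "Knn_embedding V W pos ea"
    and "subgroup G (BijGroup (V \<union> W))"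
    and "G \<subseteq> TSG_plus V W pos ea"
    and "(BijGroup (V \<union> W))\<lparr>carrier := G\<rparr> \<cong> alt_group 4 \<or>
         (BijGroup (V \<union> W))\<lparr>carrier := G\<rparr> \<cong> alt_group 5"
  shows "\<forall>g\<in>G. g ` V = V \<and> g ` W = W"
proof
  fix g assume "g \<in> G"
  let ?H = "(BijGroup (V \<union> W))\<lparr>carrier := G\<rparr>"
  have aut: "G \<subseteq> Knn_aut V W" using assms(8) by (auto simp: TSG_plus_def)
  obtain k where "?H \<cong> alt_group k" using assms(9) by blast
  moreover have "group ?H" by (rule group.subgroup_imp_group[OF group_BijGroup assms(7)])
  ultimately have "alt_group k \<cong> ?H" by (rule group.iso_sym[rotated])
  then obtain \<phi> where \<phi>: "\<phi> \<in> iso (alt_group k) ?H" by (auto simp: is_iso_def)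
  have hom: "\<phi> \<in> hom (alt_group k) (BijGroup (V \<union> W))"
    using \<phi> subgroup.subset[OF assms(7)] by (auto simp: iso_def hom_def)
  have \<phi>_image: "\<phi> ` carrier (alt_group k) = G"
    using \<phi> by (simp add: iso_def bij_betw_def)
  then obtain x where x: "x \<in> carrier (alt_group k)" "g = \<phi> x" using \<open>g \<in> G\<close> by blast
  have \<phi>_aut: "\<phi> ` carrier (alt_group k) \<subseteq> Knn_aut V W" using \<phi>_image aut by simp
  have "g ` V = V"
    unfolding x(2)
    by (rule Knn_aut_hom_preserves_part_if_generated_by_cube_roots[OF alt_group_is_group
          alt_group_carrier_as_three_cycles _ hom \<phi>_aut assms(3) x(1)])
      (rule three_cycle_cube_eq_one)
  moreover have "g ` W = (V \<union> W) - g ` V"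
    by (rule bij_betw_image_complement_part[OF Knn_aut_bij_betw[OF subsetD[OF aut \<open>g \<in> G\<close>]] assms(3)])
  ultimately show "g ` V = V \<and> g ` W = W" using assms(3) by auto
qed

end
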